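(* Let $S$ be a unilateral shift operator of any (nonzero) multiplicity acting on an infinite-dimensional Hilbert space. Then $\Lambda_k(S)=\mathbb{D}$ for all $k\in\mathbb{N}$.
   Context: $\mathbb{D}=\{z\in\mathbb{C}:|z|<1\}$. A shift of multiplicity $\dim\mathcal{K}$ is an operator unitarily equivalent to $S:\ell^2(\mathcal{K})\to\ell^2(\mathcal{K})$, $S(x_0,x_1,\dots)=(0,x_0,x_1,\dots)$, for a nonzero Hilbert space $\mathcal{K}$. For $T\in\mathcal{B}(\mathcal{L})$ and $k\in\mathbb{N}$, $\Lambda_k(T)=\{\lambda\in\mathbb{C}: PTP=\lambda P\text{ for some orthogonal projection } P \text{ of rank } k\}$. *)

theory Defs
  imports "HOL-Analysis.Analysis"
begin

text \<open>Square-summable complex families indexed by a type 'i: the Hilbert space l2('i).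
  Every complex Hilbert space is unitarily equivalent to such a space.\<close>

definition l2 :: "('i \<Rightarrow> complex) set" where
  "l2 = {f. (\<lambda>i. (cmod (f i))\<^sup>2) summable_on UNIV}"

definition l2_inner :: "('i \<Rightarrow> complex) \<Rightarrow> ('i \<Rightarrow> complex) \<Rightarrow> complex" where
  "l2_inner f g = infsum (\<lambda>i. cnj (f i) * g i) UNIV"

definition lspan :: "('i \<Rightarrow> complex) set \<Rightarrow> ('i \<Rightarrow> complex) set" where
  "lspan B = {(\<lambda>i. \<Sum>b\<in>B. c b * b i) | c. True}"

definition lin_indep :: "('i \<Rightarrow> complex) set \<Rightarrow> bool" where
  "lin_indep B \<longleftrightarrow> (\<forall>c. (\<lambda>i. \<Sum>b\<in>B. c b * b i) = (\<lambda>i. 0) \<longrightarrow> (\<forall>b\<in>B. c b = 0))"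

definition orth_proj :: "(('i \<Rightarrow> complex) \<Rightarrow> ('i \<Rightarrow> complex)) \<Rightarrow> bool" where
  "orth_proj P \<longleftrightarrow>
     (\<forall>x\<in>l2. P x \<in> l2) \<and>
     (\<forall>x\<in>l2. \<forall>y\<in>l2. \<forall>a b. P (\<lambda>i. a * x i + b * y i) = (\<lambda>i. a * P x i + b * P y i)) \<and>
     (\<forall>x\<in>l2. P (P x) = P x) \<and>
     (\<forall>x\<in>l2. \<forall>y\<in>l2. l2_inner (P x) y = l2_inner x (P y))"

definition has_rank :: "(('i \<Rightarrow> complex) \<Rightarrow> ('i \<Rightarrow> complex)) \<Rightarrow> nat \<Rightarrow> bool" where
  "has_rank P k \<longleftrightarrow>
     (\<exists>B. finite B \<and> card B = k \<and> lin_indep B \<and> P ` l2 = lspan B)"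

definition higher_rank_numrange ::
  "nat \<Rightarrow> (('i \<Rightarrow> complex) \<Rightarrow> ('i \<Rightarrow> complex)) \<Rightarrow> complex set" where
  "higher_rank_numrange k T =
     {\<mu>. \<exists>P. orth_proj P \<and> has_rank P k \<and> (\<forall>x\<in>l2. P (T (P x)) = (\<lambda>i. \<mu> * P x i))}"

text \<open>The unilateral shift of multiplicity dim(l2('j)) on l2(K), K = l2('j);
  l2(N, l2('j)) is identified with l2(N x 'j).\<close>

definition ushift :: "(nat \<times> 'j \<Rightarrow> complex) \<Rightarrow> (nat \<times> 'j \<Rightarrow> complex)" where
  "ushift x = (\<lambda>(n, j). if n = 0 then 0 else x (n - 1, j))"

end

theory Submission
  imports Defs
begin

text \<open>Let S be the shift. If P is a rank-k projection with P S P = \<mu> P and x \<noteq> 0 lies in the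
  range of P, then \<langle>x, S x\<rangle> = \<langle>x, P S x\<rangle> = \<mu> |x|^2, and since S is an isometry
  |S x - \<mu> x|^2 = (1 - |\<mu>|^2) |x|^2. Hence |\<mu>| \<le> 1, and |\<mu>| = 1 would make x an
  eigenvector of S, which has none.

  Conversely, for |\<mu>| < 1 there is a finitely supported unit vector u with \<langle>u, S u\<rangle> = \<mu>.
  Shifting u by multiples of a length exceeding its support gives k orthonormal vectors u_m with
  \<langle>u_m, S u_n\<rangle> = \<mu> \<delta>_mn, and the projection onto their span compresses S to \<mu>.\<close>

lemma l2_inner_summable:
  assumes "x \<in> l2" "y \<in> l2"
  shows "(\<lambda>i. cnj (x i) * y i) summable_on UNIV"
proof -
  have S: "(\<lambda>i. (cmod (x i))\<^sup>2 + (cmod (y i))\<^sup>2) summable_on UNIV"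
    using assms by (intro summable_on_add) (auto simp: l2_def)
  have bound: "norm (cnj (x i) * y i) \<le> (cmod (x i))\<^sup>2 + (cmod (y i))\<^sup>2" for i
  proof -
    have "norm (cnj (x i) * y i) = cmod (x i) * cmod (y i)"
      by (simp add: norm_mult)
    also have "\<dots> \<le> (cmod (x i))\<^sup>2 + (cmod (y i))\<^sup>2"
      using sum_squares_bound[of "cmod (x i)" "cmod (y i)"]
        mult_nonneg_nonneg[OF norm_ge_zero norm_ge_zero, of "x i" "y i"]
      unfolding power2_eq_square by linarith
    finally show ?thesis .
  qed
  have "(\<lambda>i. norm (cnj (x i) * y i)) summable_on UNIV"
    by (rule summable_on_comparison_test[OF S]) (simp_all add: bound)
  then show ?thesis
    by (rule abs_summable_summable)
qed

lemma l2_scale: "x \<in> l2 \<Longrightarrow> (\<lambda>i. a * x i) \<in> l2"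
  by (auto simp: l2_def norm_mult power_mult_distrib intro: summable_on_cmult_right)

lemma l2_add:
  assumes "x \<in> l2" "y \<in> l2"
  shows "(\<lambda>i. x i + y i) \<in> l2"
proof -
  have S: "(\<lambda>i. 2 * (cmod (x i))\<^sup>2 + 2 * (cmod (y i))\<^sup>2) summable_on UNIV"
    using assms by (intro summable_on_add summable_on_cmult_right) (auto simp: l2_def)
  have bound: "(cmod (x i + y i))\<^sup>2 \<le> 2 * (cmod (x i))\<^sup>2 + 2 * (cmod (y i))\<^sup>2" for i
  proof -
    have "(cmod (x i + y i))\<^sup>2 \<le> (cmod (x i) + cmod (y i))\<^sup>2"
      by (intro power_mono norm_triangle_ineq) auto
    also have "\<dots> \<le> 2 * (cmod (x i))\<^sup>2 + 2 * (cmod (y i))\<^sup>2"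
      using sum_squares_bound[of "cmod (x i)" "cmod (y i)"] by (simp add: power2_sum)
    finally show ?thesis .
  qed
  show ?thesis
    unfolding l2_def mem_Collect_eq
    by (rule summable_on_comparison_test[OF S]) (simp_all add: bound)
qed

lemma l2_sum:
  assumes "finite A" "\<And>a. a \<in> A \<Longrightarrow> f a \<in> l2"
  shows "(\<lambda>i. \<Sum>a\<in>A. c a * f a i) \<in> l2"
  using assms
proof (induction A rule: finite_induct)
  case empty
  then show ?case by (simp add: l2_def)
next
  case (insert a A)
  then show ?case by (simp add: l2_add l2_scale)
qed

lemma l2_inner_commute: "l2_inner y x = cnj (l2_inner x y)"
  unfolding l2_inner_def infsum_cnj[symmetric] by (simp add: mult.commute)

lemma l2_inner_scale_right: "l2_inner x (\<lambda>i. a * y i) = a * l2_inner x y"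
  unfolding l2_inner_def by (simp add: algebra_simps infsum_cmult_right')

lemma l2_inner_add_right:
  assumes "x \<in> l2" "y \<in> l2" "z \<in> l2"
  shows "l2_inner x (\<lambda>i. y i + z i) = l2_inner x y + l2_inner x z"
  unfolding l2_inner_def
  by (simp add: distrib_left infsum_add l2_inner_summable assms)

lemma l2_inner_sum_right:
  assumes "finite A" "x \<in> l2" "\<And>a. a \<in> A \<Longrightarrow> f a \<in> l2"
  shows "l2_inner x (\<lambda>i. \<Sum>a\<in>A. c a * f a i) = (\<Sum>a\<in>A. c a * l2_inner x (f a))"
  using assms(1,3)
proof (induction A rule: finite_induct)
  case empty
  then show ?case by (simp add: l2_inner_def)
next
  case (insert a A)
  then show ?case
    by (simp add: l2_inner_add_right l2_inner_scale_right l2_scale l2_sum assms(2))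
qed

lemma l2_inner_scale_left: "l2_inner (\<lambda>i. a * x i) y = cnj a * l2_inner x y"
  by (metis l2_inner_commute l2_inner_scale_right complex_cnj_mult)

lemma l2_inner_add_left:
  assumes "x \<in> l2" "y \<in> l2" "z \<in> l2"
  shows "l2_inner (\<lambda>i. x i + y i) z = l2_inner x z + l2_inner y z"
  using l2_inner_add_right[OF assms(3,1,2)] by (metis l2_inner_commute complex_cnj_add)

lemma l2_inner_eq_0_if_disjoint_support:
  assumes "\<And>i. x i = 0 \<or> y i = 0"
  shows "l2_inner x y = 0"
  unfolding l2_inner_def by (rule infsum_0) (use assms in auto)

definition l2_normsq :: "('i \<Rightarrow> complex) \<Rightarrow> real" where
  "l2_normsq x = (\<Sum>\<^sub>\<infinity>i. (cmod (x i))\<^sup>2)"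

lemma l2_inner_self:
  assumes "x \<in> l2"
  shows "l2_inner x x = of_real (l2_normsq x)"
proof -
  have "((\<lambda>i. (cmod (x i))\<^sup>2) has_sum l2_normsq x) UNIV"
    using assms unfolding l2_def l2_normsq_def by (simp add: has_sum_infsum)
  then have "((\<lambda>i. of_real ((cmod (x i))\<^sup>2)) has_sum (of_real (l2_normsq x) :: complex)) UNIV"
    by (rule has_sum_of_real)
  then show ?thesis
    unfolding l2_inner_def complex_norm_square by (simp add: mult.commute infsumI)
qed

lemma l2_normsq_nonneg: "l2_normsq x \<ge> 0"
  unfolding l2_normsq_def by (simp add: infsum_nonneg)

lemma l2_normsq_eq_0_iff:
  assumes "x \<in> l2"
  shows "l2_normsq x = 0 \<longleftrightarrow> x = (\<lambda>i. 0)"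
proof
  assume "l2_normsq x = 0"
  then have "(cmod (x i))\<^sup>2 = 0" for i
    using assms unfolding l2_normsq_def l2_def by (intro nonneg_infsum_le_0D) auto
  then show "x = (\<lambda>i. 0)" by auto
qed (simp add: l2_normsq_def)

lemma l2_normsq_compression_defect:
  assumes "orth_proj P" "x \<in> l2" "y \<in> l2" "P x = x" "P y = (\<lambda>i. \<mu> * x i)"
  shows "l2_normsq (\<lambda>i. y i - \<mu> * x i) = l2_normsq y - (cmod \<mu>)\<^sup>2 * l2_normsq x"
proof -
  have xy: "l2_inner x y = \<mu> * l2_inner x x"
  proof -
    have "l2_inner x y = l2_inner (P x) y" using assms(4) by simp
    also have "\<dots> = l2_inner x (P y)" using assms(1-3) by (simp add: orth_proj_def)
    finally show ?thesis by (simp add: assms(5) l2_inner_scale_right)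
  qed
  have w: "(\<lambda>i. y i - \<mu> * x i) = (\<lambda>i. y i + (- \<mu>) * x i)" by simp
  have "of_real (l2_normsq (\<lambda>i. y i + (- \<mu>) * x i))
      = l2_inner (\<lambda>i. y i + (- \<mu>) * x i) (\<lambda>i. y i + (- \<mu>) * x i)"
    using assms(2,3) by (intro l2_inner_self[symmetric] l2_add l2_scale)
  also have "\<dots> = l2_inner y y + (- \<mu>) * l2_inner y x
      + cnj (- \<mu>) * (l2_inner x y + (- \<mu>) * l2_inner x x)"
    by (simp only: l2_inner_add_left l2_inner_add_right l2_inner_scale_left
        l2_inner_scale_right l2_add l2_scale assms(2,3) distrib_left add.assoc)
  also have "\<dots> = of_real (l2_normsq y - (cmod \<mu>)\<^sup>2 * l2_normsq x)"
    using l2_inner_commute[of y x]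
    by (simp add: xy l2_inner_self assms(2,3) algebra_simps)
      (simp add: complex_norm_square[symmetric])
  finally show ?thesis unfolding w of_real_eq_iff .
qed

lemma has_rank_obtains_nonzero:
  fixes P :: "('i \<Rightarrow> complex) \<Rightarrow> ('i \<Rightarrow> complex)"
  assumes "has_rank P k" "k \<ge> 1"
  obtains x where "x \<in> l2" "P x \<noteq> (\<lambda>i. 0)"
proof -
  obtain B where B: "finite B" "card B = k" "lin_indep B" "P ` l2 = lspan B"
    using assms(1) unfolding has_rank_def by blast
  have "B \<noteq> {}" using B(2) assms(2) by auto
  then obtain b where b: "b \<in> B" by blast
  define c :: "('i \<Rightarrow> complex) \<Rightarrow> complex" where "c b' = (if b' = b then 1 else 0)" for b'
  have "c b' * b' i = (if b' = b then b i else 0)" for b' i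
    by (simp add: c_def)
  then have b_lincomb: "(\<lambda>i. \<Sum>b'\<in>B. c b' * b' i) = b"
    using B(1) b by simp
  have "b \<in> P ` l2"
    unfolding B(4) lspan_def by (rule CollectI, rule exI[of _ c]) (simp add: b_lincomb)
  moreover have "b \<noteq> (\<lambda>i. 0)"
  proof
    assume "b = (\<lambda>i. 0)"
    moreover have "(\<lambda>i. \<Sum>b'\<in>B. c b' * b' i) = (\<lambda>i. 0) \<longrightarrow> (\<forall>b'\<in>B. c b' = 0)"
      using B(3) unfolding lin_indep_def by (rule spec)
    ultimately have "c b = 0"
      using b b_lincomb by simp
    then show False by (simp add: c_def)
  qed
  ultimately show ?thesis using that by blast
qed

lemma higher_rank_numrange_subset_ball:
  assumes "k \<ge> 1"
    and T_l2: "\<And>x. x \<in> l2 \<Longrightarrow> T x \<in> l2"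
    and T_isometry: "\<And>x. x \<in> l2 \<Longrightarrow> l2_normsq (T x) = l2_normsq x"
    and T_no_eigenvector: "\<And>x \<mu>. x \<in> l2 \<Longrightarrow> T x = (\<lambda>i. \<mu> * x i) \<Longrightarrow> x = (\<lambda>i. 0)"
  shows "higher_rank_numrange k T \<subseteq> ball 0 1"
proof
  fix \<mu> assume "\<mu> \<in> higher_rank_numrange k T"
  then obtain P where P: "orth_proj P" "has_rank P k"
    and compress: "\<And>x. x \<in> l2 \<Longrightarrow> P (T (P x)) = (\<lambda>i. \<mu> * P x i)"
    by (auto simp: higher_rank_numrange_def)
  obtain z where z: "z \<in> l2" "P z \<noteq> (\<lambda>i. 0)"
    using has_rank_obtains_nonzero[OF P(2) assms(1)] .
  define x where "x = P z"
  have x: "x \<in> l2" "P x = x" "x \<noteq> (\<lambda>i. 0)"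
    using P(1) z by (auto simp: x_def orth_proj_def)
  have PTx: "P (T x) = (\<lambda>i. \<mu> * x i)"
    using compress[OF z(1)] by (simp add: x_def)
  have defect: "l2_normsq (\<lambda>i. T x i - \<mu> * x i) = (1 - (cmod \<mu>)\<^sup>2) * l2_normsq x"
    using l2_normsq_compression_defect[OF P(1) x(1) T_l2[OF x(1)] x(2) PTx] T_isometry[OF x(1)]
    by (simp add: algebra_simps)
  have nx: "l2_normsq x > 0"
    using l2_normsq_nonneg[of x] l2_normsq_eq_0_iff[OF x(1)] x(3) by linarith
  have "cmod \<mu> \<noteq> 1"
  proof
    assume "cmod \<mu> = 1"
    then have "l2_normsq (\<lambda>i. T x i - \<mu> * x i) = 0" by (simp add: defect)
    moreover have "(\<lambda>i. T x i - \<mu> * x i) \<in> l2"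
      using l2_add[OF T_l2[OF x(1)] l2_scale[OF x(1), of "- \<mu>"]] by simp
    ultimately have "T x = (\<lambda>i. \<mu> * x i)"
      by (simp add: l2_normsq_eq_0_iff fun_eq_iff)
    then show False using T_no_eigenvector[OF x(1)] x(3) by blast
  qed
  moreover have "(cmod \<mu>)\<^sup>2 \<le> 1"
  proof -
    have "0 \<le> (1 - (cmod \<mu>)\<^sup>2) * l2_normsq x"
      using l2_normsq_nonneg by (metis defect)
    then show ?thesis
      using nx by (simp add: zero_le_mult_iff)
  qed
  ultimately show "\<mu> \<in> ball 0 1"
    by (simp add: power_le_one_iff)
qed

lemma has_sum_reindex_Suc:
  fixes g :: "nat \<times> 'j \<Rightarrow> 'a::{comm_monoid_add, topological_space}"
  assumes "\<And>j. g (0, j) = 0"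
  shows "((\<lambda>(n, j). g (Suc n, j)) has_sum s) UNIV \<longleftrightarrow> (g has_sum s) UNIV"
proof -
  define h :: "nat \<times> 'j \<Rightarrow> nat \<times> 'j" where "h = (\<lambda>(n, j). (Suc n, j))"
  have "inj h" by (auto simp: h_def inj_def)
  have outside: "g i = 0" if "i \<notin> range h" for i
  proof -
    obtain n j where i: "i = (n, j)" by fastforce
    have "n = 0"
      using that i by (cases n) (auto simp: h_def)
    then show ?thesis using assms i by simp
  qed
  have "((\<lambda>(n, j). g (Suc n, j)) has_sum s) UNIV \<longleftrightarrow> ((g \<circ> h) has_sum s) UNIV"
    by (simp add: h_def comp_def case_prod_unfold)
  also have "\<dots> \<longleftrightarrow> (g has_sum s) (range h)"
    by (rule has_sum_reindex[OF \<open>inj h\<close>, symmetric])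
  also have "\<dots> \<longleftrightarrow> (g has_sum s) UNIV"
    by (rule has_sum_cong_neutral) (auto simp: outside)
  finally show ?thesis .
qed

lemma l2_inner_ushift: "l2_inner (ushift x) (ushift y) = l2_inner x y"
  unfolding l2_inner_def
  by (rule infsum_eqI', subst has_sum_reindex_Suc[symmetric]) (simp_all add: ushift_def case_prod_unfold)

lemma l2_normsq_ushift: "l2_normsq (ushift x) = l2_normsq x"
  unfolding l2_normsq_def
  by (rule infsum_eqI', subst has_sum_reindex_Suc[symmetric]) (simp_all add: ushift_def case_prod_unfold)

lemma ushift_l2:
  assumes "x \<in> l2"
  shows "ushift x \<in> l2"
proof -
  have "((\<lambda>i. (cmod (x i))\<^sup>2) has_sum l2_normsq x) UNIV"
    using assms unfolding l2_def l2_normsq_def by (simp add: has_sum_infsum)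
  then have "((\<lambda>i. (cmod (ushift x i))\<^sup>2) has_sum l2_normsq x) UNIV"
    by (subst has_sum_reindex_Suc[symmetric]) (simp_all add: ushift_def case_prod_unfold)
  then show ?thesis
    unfolding l2_def summable_on_def by blast
qed

lemma ushift_eigenvector_eq_0:
  assumes "ushift x = (\<lambda>i. \<mu> * x i)"
  shows "x = (\<lambda>i. 0)"
proof -
  have eigen: "ushift x (n, j) = \<mu> * x (n, j)" for n j
    using assms by simp
  have "x (n, j) = 0" for n j
  proof (cases "\<mu> = 0")
    case True
    then show ?thesis using eigen[of "Suc n" j] by (simp add: ushift_def)
  next
    case False
    show ?thesis
    proof (induction n)
      case 0
      then show ?case using eigen[of 0 j] False by (simp add: ushift_def)
    next
      case (Suc n)
      then show ?case using eigen[of "Suc n" j] False by (simp add: ushift_def)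
    qed
  qed
  then show ?thesis by (auto simp: fun_eq_iff)
qed

lemma higher_rank_numrange_ushift_subset_ball:
  assumes "k \<ge> 1"
  shows "higher_rank_numrange k (ushift :: (nat \<times> 'j \<Rightarrow> complex) \<Rightarrow> _) \<subseteq> ball 0 1"
  using assms ushift_l2 l2_normsq_ushift ushift_eigenvector_eq_0
  by (rule higher_rank_numrange_subset_ball)


definition orthonormal :: "('i \<Rightarrow> complex) set \<Rightarrow> bool" where
  "orthonormal B \<longleftrightarrow> B \<subseteq> l2 \<and> (\<forall>b\<in>B. \<forall>b'\<in>B. l2_inner b b' = (if b = b' then 1 else 0))"

definition orthonormal_proj :: "('i \<Rightarrow> complex) set \<Rightarrow> ('i \<Rightarrow> complex) \<Rightarrow> ('i \<Rightarrow> complex)" where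
  "orthonormal_proj B y = (\<lambda>i. \<Sum>b\<in>B. l2_inner b y * b i)"

lemma l2_inner_orthonormal_lincomb:
  assumes "finite B" "orthonormal B" "b \<in> B"
  shows "l2_inner b (\<lambda>i. \<Sum>b'\<in>B. c b' * b' i) = c b"
proof -
  have "l2_inner b (\<lambda>i. \<Sum>b'\<in>B. c b' * b' i) = (\<Sum>b'\<in>B. c b' * l2_inner b b')"
    using assms by (intro l2_inner_sum_right) (auto simp: orthonormal_def)
  also have "\<dots> = (\<Sum>b'\<in>B. if b' = b then c b else 0)"
    using assms(2,3) by (intro sum.cong) (auto simp: orthonormal_def)
  also have "\<dots> = c b"
    using assms(1,3) by simp
  finally show ?thesis .
qed

lemma orthonormal_proj_l2:
  assumes "finite B" "orthonormal B"
  shows "orthonormal_proj B y \<in> l2"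
  using assms unfolding orthonormal_proj_def orthonormal_def by (intro l2_sum) auto

lemma orthonormal_proj_idem:
  assumes "finite B" "orthonormal B"
  shows "orthonormal_proj B (orthonormal_proj B y) = orthonormal_proj B y"
  using l2_inner_orthonormal_lincomb[OF assms]
  by (simp add: orthonormal_proj_def)

lemma orth_proj_orthonormal_proj:
  fixes B :: "('i \<Rightarrow> complex) set"
  assumes "finite B" "orthonormal B"
  shows "orth_proj (orthonormal_proj B)"
  unfolding orth_proj_def
proof (intro conjI ballI allI)
  have B: "b \<in> l2" if "b \<in> B" for b
    using assms(2) that by (auto simp: orthonormal_def)
  fix x y :: "'i \<Rightarrow> complex"
  assume x: "x \<in> l2" and y: "y \<in> l2"
  show "orthonormal_proj B x \<in> l2"
    using assms by (rule orthonormal_proj_l2)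
  show "orthonormal_proj B (orthonormal_proj B x) = orthonormal_proj B x"
    using assms by (rule orthonormal_proj_idem)
  fix a c
  have "l2_inner b (\<lambda>i. a * x i + c * y i) = a * l2_inner b x + c * l2_inner b y" if "b \<in> B" for b
    using B[OF that] x y by (simp add: l2_inner_add_right l2_inner_scale_right l2_scale)
  then show "orthonormal_proj B (\<lambda>i. a * x i + c * y i)
      = (\<lambda>i. a * orthonormal_proj B x i + c * orthonormal_proj B y i)"
    unfolding orthonormal_proj_def
    by (simp add: fun_eq_iff sum.distrib sum_distrib_left algebra_simps)
  have "l2_inner (orthonormal_proj B x) y = cnj (l2_inner y (orthonormal_proj B x))"
    by (rule l2_inner_commute)
  also have "\<dots> = cnj (\<Sum>b\<in>B. l2_inner b x * l2_inner y b)"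
    unfolding orthonormal_proj_def using assms(1) y B by (simp add: l2_inner_sum_right)
  also have "\<dots> = (\<Sum>b\<in>B. l2_inner b y * l2_inner x b)"
    by (simp add: l2_inner_commute[of b x for b] l2_inner_commute[of y b for b] mult.commute)
  also have "\<dots> = l2_inner x (orthonormal_proj B y)"
    unfolding orthonormal_proj_def using assms(1) x B by (simp add: l2_inner_sum_right)
  finally show "l2_inner (orthonormal_proj B x) y = l2_inner x (orthonormal_proj B y)" .
qed

lemma has_rank_orthonormal_proj:
  assumes "finite B" "orthonormal B"
  shows "has_rank (orthonormal_proj B) (card B)"
  unfolding has_rank_def
proof (intro exI conjI)
  show "lin_indep B"
    unfolding lin_indep_def
  proof (intro allI impI ballI)
    fix c b assume zero: "(\<lambda>i. \<Sum>b\<in>B. c b * b i) = (\<lambda>i. 0)" and b: "b \<in> B"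
    have "c b = l2_inner b (\<lambda>i. \<Sum>b\<in>B. c b * b i)"
      using l2_inner_orthonormal_lincomb[OF assms b] by simp
    also have "\<dots> = 0"
      unfolding zero by (simp add: l2_inner_def)
    finally show "c b = 0" .
  qed
  show "orthonormal_proj B ` l2 = lspan B"
  proof
    show "orthonormal_proj B ` l2 \<subseteq> lspan B"
    proof
      fix z assume "z \<in> orthonormal_proj B ` l2"
      then obtain y where "z = orthonormal_proj B y" by blast
      then show "z \<in> lspan B"
        unfolding lspan_def orthonormal_proj_def
        by (intro CollectI exI[of _ "\<lambda>b. l2_inner b y"]) simp
    qed
    show "lspan B \<subseteq> orthonormal_proj B ` l2"
    proof
      fix z assume "z \<in> lspan B"
      then obtain c where z: "z = (\<lambda>i. \<Sum>b\<in>B. c b * b i)"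
        unfolding lspan_def by blast
      then have "z = orthonormal_proj B z"
        using l2_inner_orthonormal_lincomb[OF assms] by (simp add: orthonormal_proj_def)
      moreover have "z \<in> l2"
        using assms unfolding z orthonormal_def by (intro l2_sum) auto
      ultimately show "z \<in> orthonormal_proj B ` l2" by blast
    qed
  qed
qed (use assms in simp_all)

lemma orthonormal_proj_compression:
  assumes "finite B" "orthonormal B"
    and T_lincomb: "\<And>c. T (\<lambda>i. \<Sum>b\<in>B. c b * b i) = (\<lambda>i. \<Sum>b\<in>B. c b * T b i)"
    and T_l2: "\<And>b. b \<in> B \<Longrightarrow> T b \<in> l2"
    and T_compressed: "\<And>b b'. b \<in> B \<Longrightarrow> b' \<in> B \<Longrightarrow> l2_inner b (T b') = (if b = b' then \<mu> else 0)"
  shows "orthonormal_proj B (T (orthonormal_proj B x)) = (\<lambda>i. \<mu> * orthonormal_proj B x i)"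
proof -
  have "l2_inner b' (T (orthonormal_proj B x)) = \<mu> * l2_inner b' x" if b': "b' \<in> B" for b'
  proof -
    have "l2_inner b' (T (orthonormal_proj B x)) = (\<Sum>b\<in>B. l2_inner b x * l2_inner b' (T b))"
      unfolding orthonormal_proj_def T_lincomb
      using assms(1,2) b' T_l2 by (intro l2_inner_sum_right) (auto simp: orthonormal_def)
    also have "\<dots> = (\<Sum>b\<in>B. if b = b' then \<mu> * l2_inner b' x else 0)"
      using b' T_compressed by (intro sum.cong) auto
    finally show ?thesis using assms(1) b' by simp
  qed
  then show ?thesis
    by (simp add: orthonormal_proj_def sum_distrib_left mult.assoc)
qed

lemma higher_rank_numrange_orthonormal:
  assumes "finite B" "orthonormal B"
    and "\<And>c. T (\<lambda>i. \<Sum>b\<in>B. c b * b i) = (\<lambda>i. \<Sum>b\<in>B. c b * T b i)"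
    and "\<And>b. b \<in> B \<Longrightarrow> T b \<in> l2"
    and "\<And>b b'. b \<in> B \<Longrightarrow> b' \<in> B \<Longrightarrow> l2_inner b (T b') = (if b = b' then \<mu> else 0)"
  shows "\<mu> \<in> higher_rank_numrange (card B) T"
  unfolding higher_rank_numrange_def
  using orth_proj_orthonormal_proj[OF assms(1,2)] has_rank_orthonormal_proj[OF assms(1,2)]
    orthonormal_proj_compression[OF assms]
  by blast


lemma real_unit_sequence_with_shift_inner:
  fixes r :: real
  assumes "0 \<le> r" "r < 1"
  obtains a :: "nat \<Rightarrow> real" and L where "\<And>n. L \<le> n \<Longrightarrow> a n = 0"
    "(\<Sum>n<L. (a n)\<^sup>2) = 1" "(\<Sum>n<L. a (Suc n) * a n) = r"
proof -
  obtain M :: nat where M: "r / (1 - r) < M"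
    using reals_Archimedean2 by blast
  have "0 \<le> r / (1 - r)"
    using assms by simp
  then have "M > 0"
    using M by linarith
  have "r < M * (1 - r)"
    using M assms by (simp add: pos_divide_less_eq)
  then have "(M + 1) * (r / M) \<le> 1"
    using \<open>M > 0\<close> by (simp add: field_simps)
  define p where "p = sqrt (r / M)"
  define q where "q = sqrt (1 - (M + 1) * (r / M))"
  have p2: "p * p = r / M"
    using assms(1) by (simp add: p_def)
  have q2: "q * q = 1 - (M + 1) * (r / M)"
    using \<open>(M + 1) * (r / M) \<le> 1\<close> by (simp add: q_def)
  text \<open>A constant run of length M + 1 has shift ratio M / (M + 1) \<ge> r; an isolated
    coordinate further out contributes nothing to the shift term and absorbs the remaining mass.\<close>
  define a where "a n = (if n \<le> M then p else if n = M + 2 then q else 0)" for n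
  have split: "(\<Sum>n<M + 3. f n) = (\<Sum>n<M. f n) + f M + f (M + 1) + f (M + 2)" for f :: "nat \<Rightarrow> real"
  proof -
    have "M + 3 = Suc (Suc (Suc M))" by simp
    then show ?thesis by (simp only: sum.lessThan_Suc) simp
  qed
  show ?thesis
  proof (rule that[of "M + 3" a])
    show "a n = 0" if "M + 3 \<le> n" for n
      using that by (simp add: a_def)
    have "(\<Sum>n<M. (a n)\<^sup>2) = (\<Sum>n<M. r / M)"
      by (rule sum.cong) (simp_all add: a_def power2_eq_square p2)
    then show "(\<Sum>n<M + 3. (a n)\<^sup>2) = 1"
      unfolding split using \<open>M > 0\<close> by (simp add: a_def power2_eq_square p2 q2 field_simps)
    have "(\<Sum>n<M. a (Suc n) * a n) = (\<Sum>n<M. r / M)"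
      by (rule sum.cong) (simp_all add: a_def p2)
    then show "(\<Sum>n<M + 3. a (Suc n) * a n) = r"
      unfolding split using \<open>M > 0\<close> by (simp add: a_def)
  qed
qed

lemma unit_sequence_with_shift_inner:
  assumes "cmod \<mu> < 1"
  obtains v :: "nat \<Rightarrow> complex" and L where "\<And>n. L \<le> n \<Longrightarrow> v n = 0"
    "(\<Sum>n<L. cnj (v n) * v n) = 1" "(\<Sum>n<L. cnj (v (Suc n)) * v n) = \<mu>"
proof -
  obtain a L where a: "\<And>n. L \<le> n \<Longrightarrow> a n = 0"
    "(\<Sum>n<L. (a n)\<^sup>2) = 1" "(\<Sum>n<L. a (Suc n) * a n) = cmod \<mu>"
    using real_unit_sequence_with_shift_inner[OF norm_ge_zero assms] by metis
  define \<theta> where "\<theta> = Arg \<mu>"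
  define v where "v n = of_real (a n) * cis (- (real n * \<theta>))" for n
  have cnj_v: "cnj (v n) = of_real (a n) * cis (real n * \<theta>)" for n
    by (simp add: v_def cis_cnj)
  have "cnj (v n) * v n = of_real (a n * a n) * (cis (real n * \<theta>) * cis (- (real n * \<theta>)))" for n
    unfolding cnj_v by (simp only: v_def of_real_mult mult_ac)
  then have "cnj (v n) * v n = of_real ((a n)\<^sup>2)" for n
    by (simp add: cis_mult power2_eq_square)
  then have "(\<Sum>n<L. cnj (v n) * v n) = of_real (\<Sum>n<L. (a n)\<^sup>2)"
    by simp
  then have norm_v: "(\<Sum>n<L. cnj (v n) * v n) = 1"
    by (simp only: a(2) of_real_1)
  have "cnj (v (Suc n)) * v n
      = of_real (a (Suc n) * a n) * (cis (real (Suc n) * \<theta>) * cis (- (real n * \<theta>)))" for n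
    unfolding cnj_v by (simp only: v_def of_real_mult mult_ac)
  then have "cnj (v (Suc n)) * v n = of_real (a (Suc n) * a n) * cis \<theta>" for n
    by (simp add: cis_mult algebra_simps)
  then have "(\<Sum>n<L. cnj (v (Suc n)) * v n) = of_real (\<Sum>n<L. a (Suc n) * a n) * cis \<theta>"
    by (simp add: sum_distrib_right)
  also have "\<dots> = \<mu>"
    using rcis_cmod_Arg[of \<mu>] by (simp add: a(3) rcis_def \<theta>_def)
  finally have shift_v: "(\<Sum>n<L. cnj (v (Suc n)) * v n) = \<mu>" .
  have "v n = 0" if "L \<le> n" for n
    using a(1)[OF that] by (simp add: v_def)
  then show ?thesis
    using norm_v shift_v by (rule that)
qed

lemma has_sum_column:
  fixes g :: "nat \<times> 'j \<Rightarrow> 'a::{comm_monoid_add, topological_space}"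
  assumes "\<And>n j. j \<noteq> j' \<or> L \<le> n \<Longrightarrow> g (n, j) = 0"
  shows "(g has_sum (\<Sum>n<L. g (n, j'))) UNIV"
proof -
  define F where "F = (\<lambda>n. (n, j')) ` {..<L}"
  have "(g has_sum sum g F) F"
    by (simp add: F_def)
  moreover have "g i = 0" if "i \<notin> F" for i
  proof (cases i)
    case (Pair n j)
    have "(n, j') \<in> F" if "n < L"
      using that by (simp add: F_def)
    then have "j \<noteq> j' \<or> L \<le> n"
      using \<open>i \<notin> F\<close> Pair by (cases "n < L") auto
    then show ?thesis by (simp add: Pair assms)
  qed
  moreover have "(g has_sum s) F \<longleftrightarrow> (g has_sum s) UNIV" if "\<And>i. i \<notin> F \<Longrightarrow> g i = 0" for s
    using that by (intro has_sum_cong_neutral) auto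
  ultimately have "(g has_sum sum g F) UNIV"
    by blast
  moreover have "sum g F = (\<Sum>n<L. g (n, j'))"
    unfolding F_def by (subst sum.reindex) (auto simp: inj_on_def)
  ultimately show ?thesis by simp
qed

lemma ushift_unit_vector:
  assumes "cmod \<mu> < 1"
  obtains u :: "nat \<times> 'j \<Rightarrow> complex" and L where "u \<in> l2" "\<And>n j. L \<le> n \<Longrightarrow> u (n, j) = 0"
    "l2_inner u u = 1" "l2_inner u (ushift u) = \<mu>"
proof -
  obtain v L where v: "\<And>n. L \<le> n \<Longrightarrow> v n = 0"
    "(\<Sum>n<L. cnj (v n) * v n) = 1" "(\<Sum>n<L. cnj (v (Suc n)) * v n) = \<mu>"
    using unit_sequence_with_shift_inner[OF assms] by metis
  define j0 :: 'j where "j0 = undefined"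
  define u where "u = (\<lambda>(n, j). if j = j0 then v n else 0)"
  have u_support: "u (n, j) = 0" if "j \<noteq> j0 \<or> L \<le> n" for n j
    using that v(1) by (auto simp: u_def)
  have "((\<lambda>i. (cmod (u i))\<^sup>2) has_sum (\<Sum>n<L. (cmod (u (n, j0)))\<^sup>2)) UNIV"
    by (rule has_sum_column) (simp add: u_support)
  then have "u \<in> l2"
    unfolding l2_def summable_on_def by blast
  moreover have "((\<lambda>i. cnj (u i) * u i) has_sum 1) UNIV"
    using has_sum_column[where g = "\<lambda>i. cnj (u i) * u i" and j' = j0 and L = L] v(2)
    by (simp add: u_support) (simp add: u_def)
  moreover have "((\<lambda>i. cnj (u i) * ushift u i) has_sum \<mu>) UNIV"
  proof (subst has_sum_reindex_Suc[symmetric])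
    show "cnj (u (0, j)) * ushift u (0, j) = 0" for j
      by (simp add: ushift_def)
    show "((\<lambda>(n, j). cnj (u (Suc n, j)) * ushift u (Suc n, j)) has_sum \<mu>) UNIV"
      using has_sum_column[where g = "\<lambda>(n, j). cnj (u (Suc n, j)) * u (n, j)" and j' = j0 and L = L] v(3)
      by (simp add: u_support ushift_def) (simp add: u_def)
  qed
  ultimately have "l2_inner u u = 1" "l2_inner u (ushift u) = \<mu>"
    unfolding l2_inner_def by (simp_all add: infsumI)
  moreover have "u (n, j) = 0" if "L \<le> n" for n j
    using that by (simp add: u_support)
  ultimately show ?thesis
    using that[of u L] \<open>u \<in> l2\<close> by blast
qed

lemma ushift_pow_apply: "(ushift ^^ p) x (n, j) = (if n < p then 0 else x (n - p, j))"
  by (induction p arbitrary: n) (auto simp: ushift_def)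

lemma ushift_pow_l2: "x \<in> l2 \<Longrightarrow> (ushift ^^ p) x \<in> l2"
  by (induction p) (simp_all add: ushift_l2)

lemma l2_inner_ushift_pow: "l2_inner ((ushift ^^ p) x) ((ushift ^^ p) y) = l2_inner x y"
  by (induction p) (simp_all add: l2_inner_ushift)

lemma ushift_orthonormal_family:
  fixes k :: nat
  assumes "cmod \<mu> < 1"
  obtains B :: "(nat \<times> 'j \<Rightarrow> complex) set" where "finite B" "card B = k" "orthonormal B"
    "\<And>b b'. b \<in> B \<Longrightarrow> b' \<in> B \<Longrightarrow> l2_inner b (ushift b') = (if b = b' then \<mu> else 0)"
proof -
  obtain u :: "nat \<times> 'j \<Rightarrow> complex" and L where u: "u \<in> l2" "\<And>n j. L \<le> n \<Longrightarrow> u (n, j) = 0"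
    "l2_inner u u = 1" "l2_inner u (ushift u) = \<mu>"
    using ushift_unit_vector[OF assms] by metis
  text \<open>Blocks of length K = L + 1 leave room for one shift: w m and ushift (w m) both
    live in block m.\<close>
  define K where "K = Suc L"
  define w where "w m = (ushift ^^ (m * K)) u" for m
  have w_l2: "w m \<in> l2" for m
    using u(1) by (simp add: w_def ushift_pow_l2)
  have shift_w: "ushift (w m) = (ushift ^^ (m * K)) (ushift u)" for m
    by (simp add: w_def funpow_swap1)
  have block: "n div K = m" if "m * K \<le> n" "n < m * K + K" for m n
    using that by (intro div_nat_eqI) (simp_all add: mult.commute)
  have w_block: "n div K = m" if "w m (n, j) \<noteq> 0" for m n j
  proof -
    have "m * K \<le> n" "\<not> L \<le> n - m * K"
      using that u(2)[of "n - m * K" j] by (auto simp: w_def ushift_pow_apply split: if_splits)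
    then show ?thesis using block by (simp add: K_def)
  qed
  have shift_w_block: "n div K = m" if "ushift (w m) (n, j) \<noteq> 0" for m n j
  proof -
    have "(ushift ^^ (m * K)) (ushift u) (n, j) \<noteq> 0"
      using that by (simp add: shift_w)
    then have "m * K < n" "\<not> L \<le> n - m * K - 1"
      using u(2)[of "n - m * K - 1" j] by (auto simp: ushift_pow_apply ushift_def split: if_splits)
    then show ?thesis using block by (simp add: K_def)
  qed
  have inner_w: "l2_inner (w m) (w m') = (if m = m' then 1 else 0)" for m m'
  proof (cases "m = m'")
    case True
    then show ?thesis using u(3) by (simp add: w_def l2_inner_ushift_pow)
  next
    case False
    have "w m i = 0 \<or> w m' i = 0" for i
      using w_block[of m "fst i" "snd i"] w_block[of m' "fst i" "snd i"] False by auto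
    then show ?thesis using False by (simp add: l2_inner_eq_0_if_disjoint_support)
  qed
  have inner_shift_w: "l2_inner (w m) (ushift (w m')) = (if m = m' then \<mu> else 0)" for m m'
  proof (cases "m = m'")
    case True
    then show ?thesis
      using u(4) unfolding shift_w by (simp add: w_def l2_inner_ushift_pow)
  next
    case False
    have "w m i = 0 \<or> ushift (w m') i = 0" for i
      using w_block[of m "fst i" "snd i"] shift_w_block[of m' "fst i" "snd i"] False by auto
    then show ?thesis using False by (simp add: l2_inner_eq_0_if_disjoint_support)
  qed
  have "inj w"
  proof (rule injI)
    fix m m' assume "w m = w m'"
    then show "m = m'" using inner_w[of m m] inner_w[of m m'] by (simp split: if_splits)
  qed
  define B where "B = w ` {..<k}"
  show ?thesis
  proof (rule that)
    show "finite B" by (simp add: B_def)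
    show "card B = k"
      using \<open>inj w\<close> by (simp add: B_def card_image inj_on_subset)
    show "orthonormal B"
      using w_l2 inner_w \<open>inj w\<close> by (auto simp: orthonormal_def B_def inj_eq)
    show "l2_inner b (ushift b') = (if b = b' then \<mu> else 0)" if "b \<in> B" "b' \<in> B" for b b'
      using that inner_shift_w \<open>inj w\<close> by (auto simp: B_def inj_eq)
  qed
qed

lemma ball_subset_higher_rank_numrange_ushift:
  "ball 0 1 \<subseteq> higher_rank_numrange k (ushift :: (nat \<times> 'j \<Rightarrow> complex) \<Rightarrow> _)"
proof
  fix \<mu> :: complex assume "\<mu> \<in> ball 0 1"
  then have "cmod \<mu> < 1" by simp
  then obtain B :: "(nat \<times> 'j \<Rightarrow> complex) set" where B: "finite B" "card B = k" "orthonormal B"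
    "\<And>b b'. b \<in> B \<Longrightarrow> b' \<in> B \<Longrightarrow> l2_inner b (ushift b') = (if b = b' then \<mu> else 0)"
    using ushift_orthonormal_family[where k = k] by blast
  have "\<mu> \<in> higher_rank_numrange (card B) (ushift :: (nat \<times> 'j \<Rightarrow> complex) \<Rightarrow> _)"
  proof (rule higher_rank_numrange_orthonormal[OF B(1,3)])
    show "ushift (\<lambda>i. \<Sum>b\<in>B. c b * b i) = (\<lambda>i. \<Sum>b\<in>B. c b * ushift b i)" for c
      by (auto simp: ushift_def fun_eq_iff)
    show "ushift b \<in> l2" if "b \<in> B" for b
      using B(3) that by (auto simp: orthonormal_def intro: ushift_l2)
  qed (rule B(4))
  then show "\<mu> \<in> higher_rank_numrange k (ushift :: (nat \<times> 'j \<Rightarrow> complex) \<Rightarrow> _)"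
    using B(2) by simp
qed

theorem lemma2p6:
  fixes k :: nat
  assumes "k \<ge> 1"
  shows "higher_rank_numrange k (ushift :: (nat \<times> 'j \<Rightarrow> complex) \<Rightarrow> _) = ball 0 1"
  using higher_rank_numrange_ushift_subset_ball[OF assms] ball_subset_higher_rank_numrange_ushift
  by (rule subset_antisym)

end
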